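(* Let $T\subset\mathbb{R}^3$ be a tetrahedron with vertices $x_1,\dots,x_4$, barycentre $x_T=\frac14\sum_{i=1}^4x_i$, and let $F_i$ be the face opposite $x_i$. Set $L:=\sum_{i=1}^4|x_i-x_T|^2$ and $\varphi_T(x):=L-12|x-x_T|^2$ for $x\in T$. Then $$\frac{1}{|F_i|}\int_{F_i}\varphi_T\,ds=0\ (i=1,2,3,4),\qquad \frac{1}{|T|}\int_T\varphi_T\,dx=\frac25L,\qquad \frac{1}{|T|}\int_T|\nabla\varphi_T|^2\,dx=\frac{144}{5}L.$$
   Context: $|F_i|$ is the area of $F_i$, $|T|$ the volume of $T$, and $|\cdot|$ the Euclidean norm. *)

theory Defs
  imports "HOL-Analysis.Analysis" "HOL-Analysis.Cross3"
begin

definition ref_triangle :: "(real^2) set" where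
  "ref_triangle = {p. 0 \<le> p$1 \<and> 0 \<le> p$2 \<and> p$1 + p$2 \<le> 1}"

definition tri_area :: "real^3 \<Rightarrow> real^3 \<Rightarrow> real^3 \<Rightarrow> real" where
  "tri_area a b c = norm (cross3 (b - a) (c - a)) / 2"

text \<open>Surface integral of f over the flat triangle conv{a,b,c}, computed through the
  affine parametrisation p |-> a + p1 (b-a) + p2 (c-a) (constant surface element).\<close>
definition tri_surface_integral :: "(real^3 \<Rightarrow> real) \<Rightarrow> real^3 \<Rightarrow> real^3 \<Rightarrow> real^3 \<Rightarrow> real" where
  "tri_surface_integral f a b c =
     integral ref_triangle (\<lambda>p. f (a + (p$1) *\<^sub>R (b - a) + (p$2) *\<^sub>R (c - a)))
       * norm (cross3 (b - a) (c - a))"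

definition grad :: "(real^3 \<Rightarrow> real) \<Rightarrow> real^3 \<Rightarrow> real^3" where
  "grad f x = (\<chi> i. frechet_derivative f (at x) (axis i 1))"

end

theory Submission
  imports Defs
begin

text \<open>
  Everything reduces to one formula for the second moment of a simplex: if \<open>T\<close> is an
  \<open>n\<close>-simplex with vertices \<open>y\<^sub>0, \<dots>, y\<^sub>n\<close> and \<open>z\<close> is any point, then
  \<open>(1/|T|) \<integral>\<^sub>T |x - z|\<^sup>2 dx = (\<Sum>\<^sub>i |y\<^sub>i - z|\<^sup>2 + |\<Sum>\<^sub>i (y\<^sub>i - z)|\<^sup>2) / ((n + 1)(n + 2))\<close>.
  By an affine change of variables this follows from the Dirichlet integrals
  \<open>\<integral>\<^sub>\<Delta> \<Prod>\<^sub>i x\<^sub>i^k\<^sub>i dx = \<Prod>\<^sub>i k\<^sub>i! / (\<Sum>\<^sub>i k\<^sub>i + n)!\<close> over the standard simplex \<open>\<Delta>\<close>,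
  which Fubini reduces to Beta integrals. For the tetrahedron and \<open>z = x\<^sub>T\<close> the four vectors
  \<open>x\<^sub>i - x\<^sub>T\<close> sum to zero, so the mean of \<open>|x - x\<^sub>T|\<^sup>2\<close> is \<open>L/20\<close>; on the face opposite
  \<open>x\<^sub>i\<close> the other three sum to \<open>x\<^sub>T - x\<^sub>i\<close>, so the mean there is \<open>L/12\<close>. Together with
  \<open>\<nabla>\<phi>\<^sub>T(x) = -24 (x - x\<^sub>T)\<close> this gives all three identities.
\<close>

section \<open>Dirichlet integrals over the standard simplex\<close>

lemma has_integral_power_mult_power:
  fixes t :: real
  assumes "0 \<le> t"
  shows "((\<lambda>y. y ^ j * (t - y) ^ m) has_integral fact j * fact m / fact (j + m + 1) * t ^ (j + m + 1)) {0..t}"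
proof (induction m arbitrary: j)
  case 0
  have "((\<lambda>y. y ^ Suc j / Suc j) has_real_derivative y ^ j) (at y within {0..t})" for y
    by (intro derivative_eq_intros) auto
  then have "((\<lambda>y. y ^ j) has_integral t ^ Suc j / Suc j - 0 ^ Suc j / Suc j) {0..t}"
    using assms by (intro fundamental_theorem_of_calculus) (auto simp: has_real_derivative_iff_has_vector_derivative)
  moreover have "fact j * fact 0 / fact (j + 0 + 1) * t ^ (j + 0 + 1) = t ^ Suc j / Suc j"
    by (simp del: of_nat_Suc)
  ultimately show ?case
    by simp
next
  case (Suc m)
  have "((\<lambda>y. t * (y ^ j * (t - y) ^ m) - y ^ Suc j * (t - y) ^ m) has_integral
      t * (fact j * fact m / fact (j + m + 1) * t ^ (j + m + 1))
      - fact (Suc j) * fact m / fact (Suc j + m + 1) * t ^ (Suc j + m + 1)) {0..t}"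
    by (intro has_integral_diff has_integral_mult_right Suc.IH)
  moreover have "t * (y ^ j * (t - y) ^ m) - y ^ Suc j * (t - y) ^ m = y ^ j * (t - y) ^ Suc m" for y
    by (simp add: algebra_simps)
  moreover have "t * (fact j * fact m / fact (j + m + 1) * t ^ (j + m + 1))
      - fact (Suc j) * fact m / fact (Suc j + m + 1) * t ^ (Suc j + m + 1)
      = fact j * fact (Suc m) / fact (j + Suc m + 1) * (t ^ (j + Suc m + 1) :: real)"
  proof -
    define A B F N P :: real where "A = fact j" and "B = fact m" and "F = fact (j + m + 1)"
      and "N = j + m + 2" and "P = t ^ (j + m + 1)"
    have "fact (Suc j + m + 1) = N * F" "fact (j + Suc m + 1) = N * F"
      "fact (Suc j) = (N - (m + 1)) * A" "fact (Suc m) = (m + 1) * B"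
      "t ^ (Suc j + m + 1) = t * P" "t ^ (j + Suc m + 1) = t * P"
      by (simp_all add: A_def B_def F_def N_def P_def algebra_simps)
    moreover have "F > 0" "N > 0"
      by (simp_all add: F_def N_def)
    ultimately show ?thesis
      unfolding A_def[symmetric] B_def[symmetric] F_def[symmetric]
      by (simp only:) (simp add: field_simps)
  qed
  ultimately show ?case
    by simp
qed

lemma nn_integral_power_mult_power:
  fixes C t :: real
  assumes "0 \<le> C" "0 \<le> t"
  shows "(\<integral>\<^sup>+y. ennreal (C * (indicator {0..t} y * (y ^ j * (t - y) ^ m))) \<partial>lborel)
    = ennreal (C * (fact j * fact m / fact (j + m + 1) * t ^ (j + m + 1)))"
proof -
  have "(\<integral>\<^sup>+y. ennreal (indicator {0..t} y * (y ^ j * (t - y) ^ m)) \<partial>lborel)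
      = ennreal (fact j * fact m / fact (j + m + 1) * t ^ (j + m + 1))"
    using has_integral_power_mult_power[OF assms(2)] by (intro nn_integral_has_integral_lebesgue) auto
  moreover have "(\<integral>\<^sup>+y. ennreal (C * (indicator {0..t} y * (y ^ j * (t - y) ^ m))) \<partial>lborel)
      = ennreal C * (\<integral>\<^sup>+y. ennreal (indicator {0..t} y * (y ^ j * (t - y) ^ m)) \<partial>lborel)"
    using assms(1)
    by (subst nn_integral_cmult[symmetric]) (auto intro!: nn_integral_cong simp: ennreal_mult indicator_def)
  ultimately show ?thesis
    using assms by (simp add: ennreal_mult[symmetric])
qed

definition simplex_monomial :: "'a set \<Rightarrow> ('a \<Rightarrow> nat) \<Rightarrow> real \<Rightarrow> ('a \<Rightarrow> real) \<Rightarrow> real" where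
  "simplex_monomial A k t x = (if (\<forall>i\<in>A. 0 \<le> x i) \<and> sum x A \<le> t then \<Prod>i\<in>A. x i ^ k i else 0)"

lemma simplex_monomial_nonneg: "0 \<le> simplex_monomial A k t x"
  by (simp add: simplex_monomial_def prod_nonneg)

lemma borel_measurable_simplex_monomial [measurable]:
  "finite A \<Longrightarrow> simplex_monomial A k t \<in> borel_measurable (Pi\<^sub>M A (\<lambda>_. lborel))"
  unfolding simplex_monomial_def by measurable

lemma simplex_monomial_insert:
  assumes "finite A" "b \<notin> A"
  shows "simplex_monomial (insert b A) k t (x(b := y))
    = (if 0 \<le> y \<and> y \<le> t then y ^ k b else 0) * simplex_monomial A k (t - y) x"
proof -
  have "(\<Sum>i\<in>A. if i = b then y else x i) = sum x A"
    "(\<Prod>i\<in>A. (if i = b then y else x i) ^ k i) = (\<Prod>i\<in>A. x i ^ k i)"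
    "(\<forall>i\<in>A. 0 \<le> (if i = b then y else x i)) \<longleftrightarrow> (\<forall>i\<in>A. 0 \<le> x i)"
    using assms(2) by (auto intro!: sum.cong prod.cong)
  moreover have "\<forall>i\<in>A. 0 \<le> x i \<Longrightarrow> 0 \<le> sum x A"
    by (simp add: sum_nonneg)
  ultimately show ?thesis
    using assms by (auto simp: simplex_monomial_def)
qed

lemma nn_integral_simplex_monomial:
  assumes "finite A" "0 \<le> t"
  shows "(\<integral>\<^sup>+x. ennreal (simplex_monomial A k t x) \<partial>Pi\<^sub>M A (\<lambda>_. lborel))
    = ennreal ((\<Prod>i\<in>A. fact (k i)) / fact (sum k A + card A) * t ^ (sum k A + card A))"
  using assms
proof (induction A arbitrary: t rule: finite_induct)
  case empty
  then show ?case
    by (simp add: simplex_monomial_def PiM_empty nn_integral_count_space_finite)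
next
  case (insert b A t)
  interpret product_sigma_finite "\<lambda>_. lborel"
    by standard
  define m where "m = sum k A + card A"
  define C :: real where "C = (\<Prod>i\<in>A. fact (k i)) / fact m"
  have "C \<ge> 0"
    by (simp add: C_def prod_nonneg)
  have "(\<integral>\<^sup>+x. ennreal (simplex_monomial (insert b A) k t x) \<partial>Pi\<^sub>M (insert b A) (\<lambda>_. lborel))
      = (\<integral>\<^sup>+y. \<integral>\<^sup>+x. ennreal (if 0 \<le> y \<and> y \<le> t then y ^ k b else 0)
          * ennreal (simplex_monomial A k (t - y) x) \<partial>Pi\<^sub>M A (\<lambda>_. lborel) \<partial>lborel)"
    using insert.hyps
    by (subst product_nn_integral_insert_rev)
       (auto simp: simplex_monomial_insert simplex_monomial_nonneg ennreal_mult)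
  also have "\<dots> = (\<integral>\<^sup>+y. ennreal (C * (indicator {0..t} y * (y ^ k b * (t - y) ^ m))) \<partial>lborel)"
  proof (intro nn_integral_cong)
    fix y :: real
    show "(\<integral>\<^sup>+x. ennreal (if 0 \<le> y \<and> y \<le> t then y ^ k b else 0)
          * ennreal (simplex_monomial A k (t - y) x) \<partial>Pi\<^sub>M A (\<lambda>_. lborel))
        = ennreal (C * (indicator {0..t} y * (y ^ k b * (t - y) ^ m)))"
    proof (cases "0 \<le> y \<and> y \<le> t")
      case True
      then have "(\<integral>\<^sup>+x. ennreal (simplex_monomial A k (t - y) x) \<partial>Pi\<^sub>M A (\<lambda>_. lborel)) = ennreal (C * (t - y) ^ m)"
        using insert.IH[of "t - y"] by (simp add: C_def m_def)
      with True \<open>C \<ge> 0\<close> insert.hyps(1) show ?thesis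
        by (subst nn_integral_cmult) (auto simp: ennreal_mult[symmetric] mult_ac)
    qed auto
  qed
  also have "\<dots> = ennreal (C * (fact (k b) * fact m / fact (k b + m + 1) * t ^ (k b + m + 1)))"
    using \<open>C \<ge> 0\<close> insert.prems by (rule nn_integral_power_mult_power)
  also have "\<dots> = ennreal ((\<Prod>i\<in>insert b A. fact (k i)) / fact (sum k (insert b A) + card (insert b A))
      * t ^ (sum k (insert b A) + card (insert b A)))"
    using insert.hyps by (simp add: C_def m_def add.assoc mult_ac)
  finally show ?case .
qed

lemma has_integral_monomial_std_simplex:
  fixes k :: "'a::euclidean_space \<Rightarrow> nat"
  shows "((\<lambda>x. \<Prod>b\<in>Basis. (x \<bullet> b) ^ k b) has_integral
           (\<Prod>b\<in>Basis. fact (k b)) / fact (sum k Basis + DIM('a))) (convex hull (insert 0 Basis))"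
proof -
  let ?S = "convex hull (insert 0 Basis) :: 'a set"
  define f where "f x = (if x \<in> ?S then \<Prod>b\<in>Basis. (x \<bullet> b) ^ k b else 0)" for x
  have [measurable]: "?S \<in> sets borel"
    by (intro borel_closed compact_imp_closed finite_imp_compact_convex_hull) auto
  have [measurable]: "f \<in> borel_measurable borel"
    unfolding f_def by measurable
  have "(\<integral>\<^sup>+x. ennreal (f x) \<partial>lborel)
      = (\<integral>\<^sup>+y. ennreal (f (\<Sum>b\<in>Basis. y b *\<^sub>R b)) \<partial>Pi\<^sub>M Basis (\<lambda>_. lborel))"
    unfolding f_def by (subst lborel_eq) (simp add: nn_integral_distr)
  also have "\<dots> = (\<integral>\<^sup>+y. ennreal (simplex_monomial Basis k 1 y) \<partial>Pi\<^sub>M Basis (\<lambda>_. lborel))"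
    by (intro nn_integral_cong) (simp add: f_def simplex_monomial_def std_simplex cong: prod.cong)
  also have "\<dots> = ennreal ((\<Prod>b\<in>Basis. fact (k b)) / fact (sum k Basis + DIM('a)))"
    by (subst nn_integral_simplex_monomial) auto
  finally have "(f has_integral (\<Prod>b\<in>Basis. fact (k b)) / fact (sum k Basis + DIM('a))) UNIV"
    by (intro nn_integral_has_integral) (auto simp: f_def std_simplex prod_nonneg)
  then show ?thesis
    unfolding f_def has_integral_restrict_UNIV .
qed

lemma has_integral_const_std_simplex:
  fixes c :: real
  shows "((\<lambda>x. c) has_integral c / fact DIM('a)) (convex hull (insert 0 (Basis :: 'a::euclidean_space set)))"
  using has_integral_mult_left[OF has_integral_monomial_std_simplex[of "\<lambda>_. 0"], of c] by simp

lemma has_integral_inner_Basis_std_simplex: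
  assumes "b \<in> (Basis :: 'a::euclidean_space set)"
  shows "((\<lambda>x. x \<bullet> b) has_integral 1 / fact (DIM('a) + 1)) (convex hull (insert 0 Basis))"
  using has_integral_monomial_std_simplex[of "\<lambda>c. if c = b then 1 else 0"] assms
  by (simp add: if_distrib prod.delta cong: if_cong)

lemma has_integral_inner_Basis_mult_std_simplex:
  assumes "b \<in> (Basis :: 'a::euclidean_space set)" "c \<in> Basis"
  shows "((\<lambda>x. (x \<bullet> b) * (x \<bullet> c)) has_integral (if b = c then 2 else 1) / fact (DIM('a) + 2))
           (convex hull (insert 0 Basis))"
proof -
  define k :: "'a \<Rightarrow> nat" where "k d = (if d = b then 1 else 0) + (if d = c then 1 else 0)" for d
  have power_k: "(x \<bullet> d) ^ k d = (if d = b then x \<bullet> d else 1) * (if d = c then x \<bullet> d else 1)" for x d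
    by (simp add: k_def power_add)
  have fact_k: "fact (k d) = (if b = c \<and> d = b then 2 else 1 :: real)" for d
    by (simp add: k_def)
  have "(\<Prod>d\<in>Basis. (x \<bullet> d) ^ k d) = (x \<bullet> b) * (x \<bullet> c)" for x
    using assms by (simp add: power_k prod.distrib prod.delta)
  moreover have "(\<Prod>d\<in>Basis. fact (k d)) = (if b = c then 2 else 1 :: real)"
    using assms by (cases "b = c") (simp_all add: fact_k prod.delta)
  moreover have "sum k Basis = 2"
    using assms by (simp add: k_def sum.distrib)
  ultimately show ?thesis
    using has_integral_monomial_std_simplex[of k] by simp
qed

section \<open>Second moment of a simplex\<close>

lemma linear_eq_sum_inner_Basis:
  assumes "linear g"
  shows "g p = (\<Sum>b\<in>Basis. (p \<bullet> b) *\<^sub>R g b)"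
proof -
  have "g p = g (\<Sum>b\<in>Basis. (p \<bullet> b) *\<^sub>R b)"
    unfolding euclidean_representation ..
  then show ?thesis
    by (simp add: linear_sum[OF assms] linear_scale[OF assms])
qed

lemma power2_norm_add_linear:
  fixes g :: "'a::euclidean_space \<Rightarrow> 'b::real_inner"
  assumes "linear g"
  shows "(norm (u + g p))\<^sup>2 = (norm u)\<^sup>2 + 2 * (\<Sum>b\<in>Basis. (p \<bullet> b) * (u \<bullet> g b))
    + (\<Sum>b\<in>Basis. \<Sum>c\<in>Basis. (p \<bullet> b) * (p \<bullet> c) * (g b \<bullet> g c))"
proof -
  have "(norm (u + g p))\<^sup>2 = (norm u)\<^sup>2 + 2 * (u \<bullet> g p) + g p \<bullet> g p"
    by (simp add: power2_norm_eq_inner inner_add_left inner_add_right inner_commute[of "g p" u])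
  moreover have "u \<bullet> g p = (\<Sum>b\<in>Basis. (p \<bullet> b) * (u \<bullet> g b))"
    by (simp add: linear_eq_sum_inner_Basis[OF assms, of p] inner_sum_right)
  moreover have "g p \<bullet> g p = (\<Sum>b\<in>Basis. \<Sum>c\<in>Basis. (p \<bullet> b) * (p \<bullet> c) * (g b \<bullet> g c))"
    by (simp add: linear_eq_sum_inner_Basis[OF assms, of p] inner_sum_left inner_sum_right
        sum_distrib_left mult.assoc inner_commute[of "g c" "g b" for b c])
  ultimately show ?thesis
    by simp
qed

lemma has_integral_norm_sq_affine_std_simplex_moments:
  fixes g :: "'a::euclidean_space \<Rightarrow> 'b::real_inner"
  assumes "linear g"
  shows "((\<lambda>p. (norm (u + g p))\<^sup>2) has_integral
      (norm u)\<^sup>2 / fact DIM('a) + 2 * (u \<bullet> (\<Sum>b\<in>Basis. g b)) / fact (DIM('a) + 1)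
      + ((norm (\<Sum>b\<in>Basis. g b))\<^sup>2 + (\<Sum>b\<in>Basis. (norm (g b))\<^sup>2)) / fact (DIM('a) + 2))
    (convex hull (insert 0 Basis))"
proof -
  let ?F = "\<lambda>k. fact (DIM('a) + k) :: real"
  have "(\<Sum>b\<in>Basis. 1 / ?F 1 * (u \<bullet> g b)) = (u \<bullet> (\<Sum>b\<in>Basis. g b)) / ?F 1"
    by (simp add: inner_sum_right sum_divide_distrib)
  moreover have "(\<Sum>b\<in>Basis. \<Sum>c\<in>Basis. (if b = c then 2 else 1) / ?F 2 * (g b \<bullet> g c))
      = ((norm (\<Sum>b\<in>Basis. g b))\<^sup>2 + (\<Sum>b\<in>Basis. (norm (g b))\<^sup>2)) / ?F 2"
  proof -
    have "(if b = c then 2 else 1) / ?F 2 * (g b \<bullet> g c)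
        = (g b \<bullet> g c + (if b = c then g b \<bullet> g b else 0)) / ?F 2" for b c :: 'a
      by simp
    then show ?thesis
      by (simp add: power2_norm_eq_inner inner_sum_left inner_sum_right sum.distrib
          sum_divide_distrib[symmetric] inner_commute[of "g c" "g b" for b c])
  qed
  moreover have "((\<lambda>p. (norm u)\<^sup>2 + 2 * (\<Sum>b\<in>Basis. (p \<bullet> b) * (u \<bullet> g b))
      + (\<Sum>b\<in>Basis. \<Sum>c\<in>Basis. (p \<bullet> b) * (p \<bullet> c) * (g b \<bullet> g c))) has_integral
      (norm u)\<^sup>2 / fact DIM('a) + 2 * (\<Sum>b\<in>Basis. 1 / ?F 1 * (u \<bullet> g b))
      + (\<Sum>b\<in>Basis. \<Sum>c\<in>Basis. (if b = c then 2 else 1) / ?F 2 * (g b \<bullet> g c)))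
    (convex hull (insert 0 Basis))"
    by (intro has_integral_add has_integral_mult_right has_integral_sum has_integral_mult_left
        has_integral_const_std_simplex has_integral_inner_Basis_std_simplex
        has_integral_inner_Basis_mult_std_simplex) auto
  ultimately show ?thesis
    unfolding power2_norm_add_linear[OF assms] by simp
qed

lemma simplex_vertex_moment_identity:
  fixes u :: "'b::real_inner" and v :: "'i \<Rightarrow> 'b"
  assumes "finite B" "card B = n"
  shows "(norm u)\<^sup>2 / fact n + 2 * (u \<bullet> sum v B) / fact (n + 1)
      + ((norm (sum v B))\<^sup>2 + (\<Sum>b\<in>B. (norm (v b))\<^sup>2)) / fact (n + 2)
    = ((norm u)\<^sup>2 + (\<Sum>b\<in>B. (norm (u + v b))\<^sup>2) + (norm (u + (\<Sum>b\<in>B. u + v b)))\<^sup>2)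
      / fact (n + 2)"
proof -
  \<comment> \<open>Opaque names for the factors of \<open>fact (n + 2)\<close>, so that \<open>field_simps\<close> can clear denominators.\<close>
  define F N1 N2 :: real where "F = fact n" and "N1 = n + 1" and "N2 = n + 2"
  have "(\<Sum>b\<in>B. (norm (u + v b))\<^sup>2) = n * (norm u)\<^sup>2 + 2 * (u \<bullet> sum v B) + (\<Sum>b\<in>B. (norm (v b))\<^sup>2)"
    using assms by (simp add: power2_norm_eq_inner inner_add_left inner_add_right inner_sum_right
        sum.distrib inner_commute[of "v b" u for b] sum_distrib_left)
  moreover have "u + (\<Sum>b\<in>B. u + v b) = N1 *\<^sub>R u + sum v B"
    using assms by (simp add: N1_def sum.distrib sum_constant_scaleR algebra_simps)
  moreover have "(norm (N1 *\<^sub>R u + sum v B))\<^sup>2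
      = N1 * N1 * (norm u)\<^sup>2 + 2 * N1 * (u \<bullet> sum v B) + (norm (sum v B))\<^sup>2"
    by (simp add: power2_norm_eq_inner inner_add_left inner_add_right inner_commute[of "sum v B" u]
        algebra_simps)
  moreover have "fact (n + 1) = N1 * F" "fact (n + 2) = N2 * (N1 * F)"
    by (simp_all add: F_def N1_def N2_def algebra_simps)
  moreover have "F > 0" "N1 > 0" "N2 > 0"
    by (simp_all add: F_def N1_def N2_def)
  ultimately show ?thesis
    unfolding F_def[symmetric] by (simp add: field_simps) (simp add: N1_def N2_def algebra_simps)
qed

lemma has_integral_norm_sq_affine_std_simplex:
  fixes g :: "'a::euclidean_space \<Rightarrow> 'b::real_inner"
  assumes "linear g"
  shows "((\<lambda>p. (norm (u + g p))\<^sup>2) has_integral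
      ((norm u)\<^sup>2 + (\<Sum>b\<in>Basis. (norm (u + g b))\<^sup>2) + (norm (u + (\<Sum>b\<in>Basis. u + g b)))\<^sup>2)
        / fact (DIM('a) + 2))
    (convex hull (insert 0 Basis))"
  using has_integral_norm_sq_affine_std_simplex_moments[OF assms, of u]
  unfolding simplex_vertex_moment_identity[OF finite_Basis refl] .

section \<open>Affine images of the standard simplex\<close>

lemma Basis_cart: "(Basis :: (real^'n) set) = range (\<lambda>i. axis i 1)"
  by (auto simp: Basis_vec_def)

lemma sum_Basis_cart: "(\<Sum>b\<in>(Basis :: (real^'n) set). f b) = (\<Sum>i\<in>UNIV. f (axis i 1))"
proof -
  have "inj (\<lambda>i::'n. axis i (1::real))"
    by (auto intro: injI simp: axis_eq_axis)
  then show ?thesis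
    unfolding Basis_cart by (simp add: sum.reindex)
qed

lemma std_simplex_cart:
  "convex hull (insert 0 Basis) = {x :: real^'n. (\<forall>i. 0 \<le> x $ i) \<and> sum (($) x) UNIV \<le> 1}"
  unfolding std_simplex sum_Basis_cart by (simp add: Basis_cart inner_axis)

lemma absolutely_integrable_continuous_on_compact:
  fixes f :: "'a::euclidean_space \<Rightarrow> 'b::euclidean_space"
  assumes "compact S" "continuous_on S f"
  shows "f absolutely_integrable_on S"
proof -
  have "(\<lambda>x. indicator S x *\<^sub>R f x) \<in> borel_measurable lborel"
    using borel_measurable_continuous_on_indicator[OF borel_compact] assms by simp
  moreover have "integrable lborel (\<lambda>x. indicator S x *\<^sub>R f x)"
    using assms by (rule borel_integrable_compact)
  ultimately show ?thesis
    by (simp add: set_integrable_def integrable_completion)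
qed

lemma integral_affine_image:
  fixes f :: "real^'n::{finite,wellorder} \<Rightarrow> real" and g :: "real^'n::_ \<Rightarrow> real^'n::_"
  assumes "linear g" "inj g" "compact S" "continuous_on UNIV f"
  shows "integral ((\<lambda>x. c + g x) ` S) f = \<bar>det (matrix g)\<bar> * integral S (\<lambda>x. f (c + g x))"
proof -
  let ?h = "\<lambda>x. c + g x"
  \<comment> \<open>The change of variables theorem is stated for integrands with values in \<open>real^'m\<close>.\<close>
  define F where "F x = f x *\<^sub>R (1 :: real^1)" for x
  have cont_h: "continuous_on UNIV ?h"
    using assms(1) by (intro continuous_intros linear_continuous_on linear_conv_bounded_linear[THEN iffD1])
  have cont_F: "continuous_on UNIV F"
    unfolding F_def using assms(4) by (intro continuous_intros)
  have "compact (?h ` S)"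
    using continuous_on_subset[OF cont_h subset_UNIV] assms(3) by (rule compact_continuous_image)
  then have F_int: "F absolutely_integrable_on ?h ` S"
    using continuous_on_subset[OF cont_F subset_UNIV] by (rule absolutely_integrable_continuous_on_compact)
  have "continuous_on UNIV (\<lambda>x. F (?h x))"
    using continuous_on_compose[OF cont_h continuous_on_subset[OF cont_F subset_UNIV]] by (simp add: o_def)
  then have "continuous_on S (\<lambda>x. \<bar>det (matrix g)\<bar> *\<^sub>R F (?h x))"
    by (rule continuous_on_subset[OF continuous_on_scaleR[OF continuous_on_const] subset_UNIV])
  with assms(3) have FS_int: "(\<lambda>x. \<bar>det (matrix g)\<bar> *\<^sub>R F (?h x)) absolutely_integrable_on S"
    by (rule absolutely_integrable_continuous_on_compact)
  have "(?h has_derivative g) (at x within S)" for x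
    using has_derivative_add[OF has_derivative_const linear_imp_has_derivative[OF assms(1)]]
    by (simp add: has_derivative_at_withinI)
  moreover have "S \<in> sets lebesgue"
    using assms(3) by (simp add: borel_compact)
  moreover have "inj_on ?h S"
    using assms(2) by (auto simp: inj_on_def inj_def)
  ultimately have change: "integral (?h ` S) F = integral S (\<lambda>x. \<bar>det (matrix g)\<bar> *\<^sub>R F (?h x))"
    using F_int by (intro integral_change_of_variables) auto
  have "integral (?h ` S) f = integral (?h ` S) F $ 1"
    using integral_component_eq_cart[of F "?h ` S" 1] F_int by (simp add: F_def absolutely_integrable_on_def)
  also have "\<dots> = integral S (\<lambda>x. (\<bar>det (matrix g)\<bar> *\<^sub>R F (?h x)) $ 1)"
    unfolding change using FS_int
    by (intro integral_component_eq_cart[symmetric]) (simp add: absolutely_integrable_on_def)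
  also have "\<dots> = \<bar>det (matrix g)\<bar> * integral S (\<lambda>x. f (?h x))"
    by (simp add: F_def)
  finally show ?thesis .
qed

section \<open>The tetrahedron and its faces\<close>

definition edge_map :: "real^3 \<Rightarrow> real^3 \<Rightarrow> real^3 \<Rightarrow> real^3 \<Rightarrow> real^3 \<Rightarrow> real^3" where
  "edge_map x1 x2 x3 x4 p = p$1 *\<^sub>R (x2 - x1) + p$2 *\<^sub>R (x3 - x1) + p$3 *\<^sub>R (x4 - x1)"

lemma linear_edge_map: "linear (edge_map x1 x2 x3 x4)"
  unfolding linear_iff edge_map_def by (auto simp: algebra_simps)

lemma edge_map_axis:
  "edge_map x1 x2 x3 x4 (axis 1 1) = x2 - x1" "edge_map x1 x2 x3 x4 (axis 2 1) = x3 - x1"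
  "edge_map x1 x2 x3 x4 (axis 3 1) = x4 - x1"
  by (simp_all add: edge_map_def axis_def)

lemma inj_edge_map:
  assumes "distinct [x1, x2, x3, x4]" "\<not> affine_dependent {x1, x2, x3, x4}"
  shows "inj (edge_map x1 x2 x3 x4)"
proof (rule ccontr)
  assume "\<not> inj (edge_map x1 x2 x3 x4)"
  then obtain p where p: "edge_map x1 x2 x3 x4 p = 0" "p \<noteq> 0"
    using linear_injective_0[OF linear_edge_map] by blast
  define U where "U v = (if v = x2 then p$1 else if v = x3 then p$2 else if v = x4 then p$3
    else - (p$1 + p$2 + p$3))" for v
  have neq: "x1 \<noteq> x2" "x1 \<noteq> x3" "x1 \<noteq> x4" "x2 \<noteq> x3" "x2 \<noteq> x4" "x3 \<noteq> x4"
    using assms(1) by auto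
  have U: "U x1 = - (p$1 + p$2 + p$3)" "U x2 = p$1" "U x3 = p$2" "U x4 = p$3"
    using neq by (auto simp: U_def)
  have "sum U {x1, x2, x3, x4} = 0"
    using neq by (simp add: U)
  moreover have "(\<Sum>v\<in>{x1, x2, x3, x4}. U v *\<^sub>R v) = edge_map x1 x2 x3 x4 p"
  proof -
    have "(\<Sum>v\<in>{x1, x2, x3, x4}. U v *\<^sub>R v) = U x1 *\<^sub>R x1 + U x2 *\<^sub>R x2 + U x3 *\<^sub>R x3 + U x4 *\<^sub>R x4"
      using neq by (simp add: add.assoc)
    then show ?thesis
      by (simp add: U edge_map_def scaleR_diff_right scaleR_diff_left scaleR_add_left)
  qed
  moreover have "\<exists>v\<in>{x1, x2, x3, x4}. U v \<noteq> 0"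
  proof -
    obtain i where "p $ i \<noteq> 0"
      using p(2) by (auto simp: vec_eq_iff)
    then have "U x2 \<noteq> 0 \<or> U x3 \<noteq> 0 \<or> U x4 \<noteq> 0"
      using exhaust_3[of i] by (auto simp: U)
    then show ?thesis
      by blast
  qed
  ultimately have "affine_dependent {x1, x2, x3, x4}"
    using p(1) by (subst affine_dependent_explicit_finite) auto
  with assms(2) show False ..
qed

lemma convex_hull_tetrahedron:
  "convex hull {x1, x2, x3, x4} = (\<lambda>p. x1 + edge_map x1 x2 x3 x4 p) ` (convex hull (insert 0 Basis))"
proof -
  have "(\<lambda>p. x1 + edge_map x1 x2 x3 x4 p) ` (convex hull (insert 0 Basis))
      = (+) x1 ` (edge_map x1 x2 x3 x4 ` (convex hull (insert 0 Basis)))"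
    by (simp add: image_image)
  also have "edge_map x1 x2 x3 x4 ` (convex hull (insert 0 Basis))
      = convex hull (edge_map x1 x2 x3 x4 ` insert 0 Basis)"
    by (rule convex_hull_linear_image[OF linear_edge_map])
  also have "edge_map x1 x2 x3 x4 ` insert 0 Basis = {0, x2 - x1, x3 - x1, x4 - x1}"
    by (auto simp: Basis_cart UNIV_3 edge_map_axis linear_0[OF linear_edge_map])
  finally show ?thesis
    by (simp add: convex_hull_translation[symmetric] insert_commute)
qed

lemma integral_tetrahedron:
  fixes f :: "real^3 \<Rightarrow> real"
  assumes "distinct [x1, x2, x3, x4]" "\<not> affine_dependent {x1, x2, x3, x4}" "continuous_on UNIV f"
  shows "integral (convex hull {x1, x2, x3, x4}) f
    = \<bar>det (matrix (edge_map x1 x2 x3 x4))\<bar>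
      * integral (convex hull (insert 0 Basis)) (\<lambda>p. f (x1 + edge_map x1 x2 x3 x4 p))"
  unfolding convex_hull_tetrahedron
  by (rule integral_affine_image[OF linear_edge_map inj_edge_map[OF assms(1,2)] _ assms(3)])
     (auto intro: finite_imp_compact_convex_hull)

lemma measure_tetrahedron:
  assumes "distinct [x1, x2, x3, x4]" "\<not> affine_dependent {x1, x2, x3, x4}"
  shows "measure lebesgue (convex hull {x1, x2, x3, x4}) = \<bar>det (matrix (edge_map x1 x2 x3 x4))\<bar> / 6"
proof -
  have "convex hull {x1, x2, x3, x4} \<in> lmeasurable"
    by (intro lmeasurable_compact finite_imp_compact_convex_hull) auto
  then have "measure lebesgue (convex hull {x1, x2, x3, x4}) = integral (convex hull {x1, x2, x3, x4}) (\<lambda>_. 1)"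
    by (rule lmeasure_integral)
  also have "\<dots> = \<bar>det (matrix (edge_map x1 x2 x3 x4))\<bar> * integral (convex hull (insert 0 Basis)) (\<lambda>_::real^3. 1::real)"
    using assms by (simp add: integral_tetrahedron)
  also have "integral (convex hull (insert 0 Basis)) (\<lambda>_::real^3. 1::real) = 1 / 6"
    using has_integral_const_std_simplex[of 1, where 'a = "real^3"] by (simp add: integral_unique fact_numeral)
  finally show ?thesis
    by simp
qed

lemma has_integral_norm_sq_edge_map:
  "((\<lambda>p. (norm (x1 + edge_map x1 x2 x3 x4 p - z))\<^sup>2) has_integral
     ((norm (x1 - z))\<^sup>2 + (norm (x2 - z))\<^sup>2 + (norm (x3 - z))\<^sup>2 + (norm (x4 - z))\<^sup>2
      + (norm ((x1 - z) + (x2 - z) + (x3 - z) + (x4 - z)))\<^sup>2) / 120) (convex hull (insert 0 Basis))"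
proof -
  have "(\<lambda>p. (norm (x1 + edge_map x1 x2 x3 x4 p - z))\<^sup>2) = (\<lambda>p. (norm ((x1 - z) + edge_map x1 x2 x3 x4 p))\<^sup>2)"
    by (simp add: algebra_simps)
  moreover have "(x1 - z) + (x2 - x1) = x2 - z" "(x1 - z) + (x3 - x1) = x3 - z" "(x1 - z) + (x4 - x1) = x4 - z"
    by simp_all
  ultimately show ?thesis
    using has_integral_norm_sq_affine_std_simplex[OF linear_edge_map, of "x1 - z" x1 x2 x3 x4]
    by (simp add: sum_Basis_cart sum_3 edge_map_axis fact_numeral add_ac)
qed

lemma centroid_sum_eq_0:
  fixes a b c d :: "'a::real_vector"
  assumes "xT = (1/4) *\<^sub>R (a + b + c + d)"
  shows "(a - xT) + (b - xT) + (c - xT) + (d - xT) = 0"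
proof -
  have "4 *\<^sub>R xT = a + b + c + d"
    using assms by simp
  moreover have "(4::real) *\<^sub>R xT = xT + xT + xT + xT"
    using scaleR_add_left[of 2 2 xT] by (simp add: scaleR_2)
  ultimately show ?thesis
    by (simp add: algebra_simps)
qed

lemma measure_tetrahedron_pos:
  fixes x1 x2 x3 x4 :: "real^3"
  assumes "distinct [x1, x2, x3, x4]" "\<not> affine_dependent {x1, x2, x3, x4}"
  shows "0 < measure lebesgue (convex hull {x1, x2, x3, x4})"
proof -
  have "det (matrix (edge_map x1 x2 x3 x4)) \<noteq> 0"
    using det_nz_iff_inj[OF linear_edge_map] inj_edge_map[OF assms] by simp
  then show ?thesis
    by (simp add: measure_tetrahedron[OF assms])
qed

lemma integral_tetrahedron_centroid_quadratic:
  fixes x1 x2 x3 x4 xT :: "real^3"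
  assumes tet: "distinct [x1, x2, x3, x4]" "\<not> affine_dependent {x1, x2, x3, x4}"
    and xT: "xT = (1/4) *\<^sub>R (x1 + x2 + x3 + x4)"
    and L: "L = (norm (x1 - xT))\<^sup>2 + (norm (x2 - xT))\<^sup>2 + (norm (x3 - xT))\<^sup>2 + (norm (x4 - xT))\<^sup>2"
  shows "integral (convex hull {x1, x2, x3, x4}) (\<lambda>x. \<alpha> + \<beta> * (norm (x - xT))\<^sup>2)
    = measure lebesgue (convex hull {x1, x2, x3, x4}) * (\<alpha> + \<beta> * L / 20)"
proof -
  have second_moment:
    "((\<lambda>p. (norm (x1 + edge_map x1 x2 x3 x4 p - xT))\<^sup>2) has_integral L / 120) (convex hull (insert 0 Basis))"
    using has_integral_norm_sq_edge_map[of x1 x2 x3 x4 xT] unfolding centroid_sum_eq_0[OF xT] L by simp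
  have "((\<lambda>p. \<alpha> + \<beta> * (norm (x1 + edge_map x1 x2 x3 x4 p - xT))\<^sup>2) has_integral \<alpha> / 6 + \<beta> * (L / 120))
      (convex hull (insert 0 Basis))"
    using has_integral_add[OF has_integral_const_std_simplex[of \<alpha>, where 'a = "real^3"]
        has_integral_mult_right[OF second_moment, of \<beta>]]
    by (simp add: fact_numeral)
  then show ?thesis
    unfolding measure_tetrahedron[OF tet]
    by (subst integral_tetrahedron[OF tet]) (auto intro!: continuous_intros simp: integral_unique field_simps)
qed

lemma ref_triangle_eq_std_simplex: "ref_triangle = convex hull (insert 0 Basis)"
  by (simp add: ref_triangle_def std_simplex_cart sum_2 forall_2)

lemma has_integral_norm_sq_ref_triangle:
  fixes a b c z :: "real^3"
  shows "((\<lambda>p. (norm (a + p$1 *\<^sub>R (b - a) + p$2 *\<^sub>R (c - a) - z))\<^sup>2) has_integral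
     ((norm (a - z))\<^sup>2 + (norm (b - z))\<^sup>2 + (norm (c - z))\<^sup>2 + (norm ((a - z) + (b - z) + (c - z)))\<^sup>2) / 24)
     ref_triangle"
proof -
  define g where "g p = p$1 *\<^sub>R (b - a) + p$2 *\<^sub>R (c - a)" for p :: "real^2"
  have "linear g"
    unfolding linear_iff g_def by (auto simp: algebra_simps)
  moreover have "g (axis 1 1) = b - a" "g (axis 2 1) = c - a"
    by (simp_all add: g_def axis_def)
  moreover have "(\<lambda>p. (norm (a + p$1 *\<^sub>R (b - a) + p$2 *\<^sub>R (c - a) - z))\<^sup>2)
      = (\<lambda>p. (norm ((a - z) + g p))\<^sup>2)"
    by (simp add: g_def algebra_simps)
  moreover have "(a - z) + (b - a) = b - z" "(a - z) + (c - a) = c - z"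
    by simp_all
  ultimately show ?thesis
    using has_integral_norm_sq_affine_std_simplex[of g "a - z"]
    by (simp add: ref_triangle_eq_std_simplex sum_Basis_cart sum_2 fact_numeral add_ac)
qed

lemma tri_surface_integral_centroid_quadratic:
  fixes a b c d xT :: "real^3"
  assumes xT: "xT = (1/4) *\<^sub>R (a + b + c + d)"
    and L: "L = (norm (a - xT))\<^sup>2 + (norm (b - xT))\<^sup>2 + (norm (c - xT))\<^sup>2 + (norm (d - xT))\<^sup>2"
  shows "tri_surface_integral (\<lambda>x. L - 12 * (norm (x - xT))\<^sup>2) a b c = 0"
proof -
  have "(a - xT) + (b - xT) + (c - xT) = - (d - xT)"
    unfolding eq_neg_iff_add_eq_0 by (rule centroid_sum_eq_0[OF xT])
  then have S: "(norm (a - xT))\<^sup>2 + (norm (b - xT))\<^sup>2 + (norm (c - xT))\<^sup>2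
      + (norm ((a - xT) + (b - xT) + (c - xT)))\<^sup>2 = L"
    by (simp add: L norm_minus_commute)
  have "((\<lambda>p::real^2. L - 12 * (norm (a + p$1 *\<^sub>R (b - a) + p$2 *\<^sub>R (c - a) - xT))\<^sup>2) has_integral
      L / fact DIM(real^2) - 12 * (L / 24)) (convex hull (insert 0 Basis))"
    using has_integral_diff[OF has_integral_const_std_simplex[of L] has_integral_mult_right[OF
        has_integral_norm_sq_ref_triangle[of a b c xT, unfolded ref_triangle_eq_std_simplex], of 12]]
    unfolding S .
  then have "integral ref_triangle (\<lambda>p. L - 12 * (norm (a + p$1 *\<^sub>R (b - a) + p$2 *\<^sub>R (c - a) - xT))\<^sup>2) = 0"
    unfolding ref_triangle_eq_std_simplex by (simp add: integral_unique fact_numeral)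
  then show ?thesis
    unfolding tri_surface_integral_def by simp
qed

lemma grad_quadratic:
  "grad (\<lambda>x. \<alpha> + \<beta> * (norm (x - z))\<^sup>2) x = (2 * \<beta>) *\<^sub>R (x - z)"
proof -
  have deriv: "((\<lambda>x. \<alpha> + \<beta> * (norm (x - z))\<^sup>2) has_derivative (\<lambda>h. 2 * \<beta> * ((x - z) \<bullet> h))) (at x)"
    unfolding power2_norm_eq_inner
    by (auto intro!: derivative_eq_intros simp: inner_commute algebra_simps)
  show ?thesis
    unfolding grad_def frechet_derivative_at[OF deriv, symmetric]
    by (simp add: vec_eq_iff inner_axis)
qed

theorem lemma11:
  fixes x1 x2 x3 x4 :: "real^3" and xT :: "real^3" and L :: real
    and T :: "(real^3) set" and \<phi> :: "real^3 \<Rightarrow> real"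
  assumes tet: "distinct [x1, x2, x3, x4]" "\<not> affine_dependent {x1, x2, x3, x4}"
    and T_def: "T = convex hull {x1, x2, x3, x4}"
    and xT_def: "xT = (1/4) *\<^sub>R (x1 + x2 + x3 + x4)"
    and L_def: "L = (norm (x1 - xT))\<^sup>2 + (norm (x2 - xT))\<^sup>2 + (norm (x3 - xT))\<^sup>2 + (norm (x4 - xT))\<^sup>2"
    and phi_def: "\<And>x. \<phi> x = L - 12 * (norm (x - xT))\<^sup>2"
  shows "tri_surface_integral \<phi> x2 x3 x4 / tri_area x2 x3 x4 = 0
       \<and> tri_surface_integral \<phi> x1 x3 x4 / tri_area x1 x3 x4 = 0
       \<and> tri_surface_integral \<phi> x1 x2 x4 / tri_area x1 x2 x4 = 0
       \<and> tri_surface_integral \<phi> x1 x2 x3 / tri_area x1 x2 x3 = 0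
       \<and> integral T \<phi> / measure lebesgue T = (2/5) * L
       \<and> integral T (\<lambda>x. (norm (grad \<phi> x))\<^sup>2) / measure lebesgue T = (144/5) * L"
proof -
  have phi: "\<phi> = (\<lambda>x. L + (-12) * (norm (x - xT))\<^sup>2)"
    by (simp add: fun_eq_iff phi_def)
  have faces: "tri_surface_integral \<phi> x2 x3 x4 = 0" "tri_surface_integral \<phi> x1 x3 x4 = 0"
    "tri_surface_integral \<phi> x1 x2 x4 = 0" "tri_surface_integral \<phi> x1 x2 x3 = 0"
    unfolding phi_def[abs_def]
    by (rule tri_surface_integral_centroid_quadratic[where d = x1]
        tri_surface_integral_centroid_quadratic[where d = x2]
        tri_surface_integral_centroid_quadratic[where d = x3]
        tri_surface_integral_centroid_quadratic[where d = x4];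
        simp add: xT_def L_def add_ac)+
  have grad_sq: "(\<lambda>x. (norm (grad \<phi> x))\<^sup>2) = (\<lambda>x. 0 + 576 * (norm (x - xT))\<^sup>2)"
    unfolding phi grad_quadratic by (simp add: fun_eq_iff power_mult_distrib)
  show ?thesis
    using faces measure_tetrahedron_pos[OF tet] unfolding grad_sq
    unfolding T_def phi integral_tetrahedron_centroid_quadratic[OF tet xT_def L_def] by simp
qed

end
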